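(* Let $\mathcal I$ index a finite set of strategies for the iterated Prisoner's Dilemma (payoffs normalized with $T=1$, $S=0$), and assume $P<\tfrac12$. Suppose the strategy indexed by $i^*$ is an extortionate strategy $\mathbf p^{i^*}$ (a firm non-exceptional zero-determinant strategy with $\bar\alpha>0$) together with initial defection. If for no other $j\in\mathcal I$ is $\mathbf p^j$ firm, then $i^*$ is an evolutionarily unstable strategy for the game $\{A_{ij}\}$, and the vertex $v(i^* )$ is a repellor of the replicator dynamics: there is $\epsilon>0$ such that $1>\pi_{i^*}\ge1-\epsilon$ implies $\frac{d\pi_{i^*}}{dt}<0$.
   Context: Iterated Prisoner's Dilemma with normalized payoffs $T=1>R>P>S=0$, $2R>1$; outcomes ordered $cc,cd,dc,dd$ (own play first); payoff vectors $\mathbf S_X=(R,0,1,P)$, $\mathbf S_Y=(R,1,0,P)$, $\mathbf 1=(1,1,1,1)$, $\mathbf e_{23}=(0,1,1,0)$. A memory-one strategy vector is $\mathbf p\in[0,1]^4$, $p_i$ being the probability of playing $c$ after the $i$-th outcome, outcomes labeled from the player's own perspective; it is firm if $p_4=0$. A strategy is such a vector together with an initial play. The X Press-Dyson vector $\mathbf p-(1,1,0,0)$ decomposes uniquely as $\alpha\mathbf S_X+\beta\mathbf S_Y+\gamma\mathbf 1+\delta\mathbf e_{23}$; $\mathbf p$ is a non-exceptional zero-determinant strategy if $\delta=0$ and $\gamma>0$, and then $\bar\alpha=\alpha/\gamma$. For $i,j\in\mathcal I$, $A_{ij}$ is the long-run (Cesàro-limit) average payoff of X when X uses strategy $i$ and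 Y uses strategy $j$. Replicator dynamics on the simplex $\Delta\subset\mathbb R^{\mathcal I}$: $\frac{d\pi_i}{dt}=\pi_i(A_{i\pi}-A_{\pi\pi})$, $A_{i\pi}=\sum_j\pi_jA_{ij}$, $A_{\pi\pi}=\sum_i\pi_iA_{i\pi}$; $v(i)$ is the vertex $\pi_i=1$. $i^*$ is an evolutionarily unstable strategy (EUS) if $A_{ji^*}>A_{i^*i^*}$ for all $j\ne i^*$. *)

theory Defs
  imports Complex_Main
begin

text \<open>Outcomes of one round, labelled from the focal player's perspective
  (own play first): cc, cd, dc, dd.  A play is a bool, True = cooperate.\<close>

datatype outcome = CC | CD | DC | DD

definition osum :: "(outcome \<Rightarrow> real) \<Rightarrow> real" where
  "osum f = f CC + f CD + f DC + f DD"

definition mk_outcome :: "bool \<Rightarrow> bool \<Rightarrow> outcome" where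
  "mk_outcome x y = (if x then (if y then CC else CD) else (if y then DC else DD))"

fun own_play :: "outcome \<Rightarrow> bool" where
  "own_play CC = True" | "own_play CD = True" | "own_play DC = False" | "own_play DD = False"

fun other_play :: "outcome \<Rightarrow> bool" where
  "other_play CC = True" | "other_play CD = False" | "other_play DC = True" | "other_play DD = False"

fun swap_outcome :: "outcome \<Rightarrow> outcome" where
  "swap_outcome CC = CC" | "swap_outcome CD = DC" | "swap_outcome DC = CD" | "swap_outcome DD = DD"

fun SX :: "real \<Rightarrow> real \<Rightarrow> outcome \<Rightarrow> real" where
  "SX R P CC = R" | "SX R P CD = 0" | "SX R P DC = 1" | "SX R P DD = P"

fun SY :: "real \<Rightarrow> real \<Rightarrow> outcome \<Rightarrow> real" where
  "SY R P CC = R" | "SY R P CD = 1" | "SY R P DC = 0" | "SY R P DD = P"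

fun e23 :: "outcome \<Rightarrow> real" where
  "e23 CC = 0" | "e23 CD = 1" | "e23 DC = 1" | "e23 DD = 0"

fun tilde :: "outcome \<Rightarrow> real" where
  "tilde CC = 1" | "tilde CD = 1" | "tilde DC = 0" | "tilde DD = 0"

text \<open>A memory-one strategy vector p in [0,1]^4 (p w = probability of cooperating
  after outcome w); a strategy is such a vector together with an initial play.\<close>
type_synonym strategy = "(outcome \<Rightarrow> real) \<times> bool"

definition is_mem1_vector :: "(outcome \<Rightarrow> real) \<Rightarrow> bool" where
  "is_mem1_vector p \<longleftrightarrow> (\<forall>w. 0 \<le> p w \<and> p w \<le> 1)"

definition firm :: "(outcome \<Rightarrow> real) \<Rightarrow> bool" where
  "firm p \<longleftrightarrow> p DD = 0"

text \<open>Press-Dyson decomposition p - (1,1,0,0) = \<alpha> S_X + \<beta> S_Y + \<gamma> 1 + \<delta> e_23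
  (the decomposition is unique, as the four vectors form a basis).\<close>
definition PD_decomp :: "real \<Rightarrow> real \<Rightarrow> (outcome \<Rightarrow> real)
    \<Rightarrow> real \<Rightarrow> real \<Rightarrow> real \<Rightarrow> real \<Rightarrow> bool" where
  "PD_decomp R P p \<alpha> \<beta> \<gamma> \<delta> \<longleftrightarrow>
     (\<forall>w. p w - tilde w = \<alpha> * SX R P w + \<beta> * SY R P w + \<gamma> + \<delta> * e23 w)"

text \<open>Non-exceptional zero-determinant strategy with \<delta> = 0, \<gamma> > 0; alpha-bar = alpha / gamma.\<close>
definition extortionate :: "real \<Rightarrow> real \<Rightarrow> (outcome \<Rightarrow> real) \<Rightarrow> bool" where
  "extortionate R P p \<longleftrightarrow> firm p \<and>
     (\<exists>\<alpha> \<beta> \<gamma>. PD_decomp R P p \<alpha> \<beta> \<gamma> 0 \<and> \<gamma> > 0 \<and> \<alpha> / \<gamma> > 0)"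

definition play_prob :: "real \<Rightarrow> bool \<Rightarrow> real" where
  "play_prob c b = (if b then c else 1 - c)"

definition trans :: "(outcome \<Rightarrow> real) \<Rightarrow> (outcome \<Rightarrow> real) \<Rightarrow> outcome \<Rightarrow> outcome \<Rightarrow> real" where
  "trans p q w w' = play_prob (p w) (own_play w') * play_prob (q (swap_outcome w)) (other_play w')"

fun outcome_dist :: "strategy \<Rightarrow> strategy \<Rightarrow> nat \<Rightarrow> outcome \<Rightarrow> real" where
  "outcome_dist X Y 0 w' = (if w' = mk_outcome (snd X) (snd Y) then 1 else 0)"
| "outcome_dist X Y (Suc n) w' = osum (\<lambda>w. outcome_dist X Y n w * trans (fst X) (fst Y) w w')"

definition expected_payoff :: "real \<Rightarrow> real \<Rightarrow> strategy \<Rightarrow> strategy \<Rightarrow> nat \<Rightarrow> real" where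
  "expected_payoff R P X Y n = osum (\<lambda>w. outcome_dist X Y n w * SX R P w)"

definition longrun_payoff :: "real \<Rightarrow> real \<Rightarrow> strategy \<Rightarrow> strategy \<Rightarrow> real" where
  "longrun_payoff R P X Y = lim (\<lambda>N. (\<Sum>n<N. expected_payoff R P X Y n) / real N)"

definition payA :: "real \<Rightarrow> real \<Rightarrow> ('i \<Rightarrow> strategy) \<Rightarrow> 'i \<Rightarrow> 'i \<Rightarrow> real" where
  "payA R P s i j = longrun_payoff R P (s i) (s j)"

definition simplex :: "('i::finite \<Rightarrow> real) set" where
  "simplex = {\<pi>. (\<forall>i. 0 \<le> \<pi> i) \<and> (\<Sum>i\<in>UNIV. \<pi> i) = 1}"

definition A_vs_mix :: "('i::finite \<Rightarrow> 'i \<Rightarrow> real) \<Rightarrow> 'i \<Rightarrow> ('i \<Rightarrow> real) \<Rightarrow> real" where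
  "A_vs_mix A i \<pi> = (\<Sum>j\<in>UNIV. \<pi> j * A i j)"

definition A_mix_mix :: "('i::finite \<Rightarrow> 'i \<Rightarrow> real) \<Rightarrow> ('i \<Rightarrow> real) \<Rightarrow> real" where
  "A_mix_mix A \<pi> = (\<Sum>i\<in>UNIV. \<pi> i * A_vs_mix A i \<pi>)"

definition replicator_rhs :: "('i::finite \<Rightarrow> 'i \<Rightarrow> real) \<Rightarrow> ('i \<Rightarrow> real) \<Rightarrow> 'i \<Rightarrow> real" where
  "replicator_rhs A \<pi> i = \<pi> i * (A_vs_mix A i \<pi> - A_mix_mix A \<pi>)"

definition EUS :: "('i \<Rightarrow> 'i \<Rightarrow> real) \<Rightarrow> 'i \<Rightarrow> bool" where
  "EUS A i\<^sub>0 \<longleftrightarrow> (\<forall>j. j \<noteq> i\<^sub>0 \<longrightarrow> A j i\<^sub>0 > A i\<^sub>0 i\<^sub>0)"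

end

theory Submission
  imports Defs "HOL-Analysis.Cartesian_Euclidean_Space"
begin

text \<open>Played against itself, an extortionate strategy that opens with defection never leaves
  the outcome dd and earns the punishment payoff P.  Against any strategy with \<open>p\<^sub>4 > 0\<close>,
  on the other hand, the stationary distribution of the induced Markov chain is not concentrated
  on dd; with \<open>P < 1/2\<close> this makes the sum of the two long-run payoffs exceed 2P, while the
  Press-Dyson relation \<open>\<alpha> s\<^sub>Y + \<beta> s\<^sub>X + \<gamma> = 0\<close> with \<open>\<alpha> > 0\<close> forces the opponent's payoff
  to lie above P as soon as the sum does.  So every other strategy invades the extortioner
  strictly, and a strict invasion margin at a vertex makes it repelling for the replicator
  dynamics once the competing payoffs are bounded.\<close>

section \<open>Cesaro means of powers of a stochastic matrix\<close>

fun mat_power :: "real^'n^'n \<Rightarrow> nat \<Rightarrow> real^'n^'n" where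
  "mat_power M 0 = mat 1"
| "mat_power M (Suc n) = mat_power M n ** M"

definition stochastic :: "real^'n^'n \<Rightarrow> bool" where
  "stochastic M \<longleftrightarrow> (\<forall>i j. 0 \<le> M$i$j) \<and> (\<forall>i. (\<Sum>j\<in>UNIV. M$i$j) = 1)"

definition cesaro_mean :: "real^'n^'n \<Rightarrow> nat \<Rightarrow> real^'n^'n" where
  "cesaro_mean M N = (1 / real N) *\<^sub>R (\<Sum>n<N. mat_power M n)"

lemma stochastic_mat_1: "stochastic (mat 1 :: real^'n^'n)"
  unfolding stochastic_def mat_def by (auto simp: sum.delta)

lemma stochastic_matrix_mult:
  assumes "stochastic (A::real^'n^'n)" "stochastic B" shows "stochastic (A ** B)"
proof -
  have "(\<Sum>j\<in>UNIV. (A ** B)$i$j) = 1" for i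
  proof -
    have "(\<Sum>j\<in>UNIV. (A ** B)$i$j) = (\<Sum>k\<in>UNIV. A$i$k * (\<Sum>j\<in>UNIV. B$k$j))"
      by (simp add: matrix_matrix_mult_def sum_distrib_left) (rule sum.swap)
    also have "\<dots> = 1" using assms by (simp add: stochastic_def)
    finally show ?thesis .
  qed
  moreover have "0 \<le> (A ** B)$i$j" for i j
    using assms by (auto simp: matrix_matrix_mult_def stochastic_def intro!: sum_nonneg)
  ultimately show ?thesis by (simp add: stochastic_def)
qed

lemma stochastic_mat_power: "stochastic M \<Longrightarrow> stochastic (mat_power M n)"
  by (induction n) (auto simp: stochastic_mat_1 stochastic_matrix_mult)

lemma stochastic_entry_le_1: assumes "stochastic (A::real^'n^'n)" shows "A$i$j \<le> 1"
proof -
  have "A$i$j \<le> (\<Sum>j\<in>UNIV. A$i$j)"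
    using assms by (intro member_le_sum) (auto simp: stochastic_def)
  then show ?thesis using assms by (simp add: stochastic_def)
qed

lemma stochastic_limit:
  fixes X :: "nat \<Rightarrow> real^'n^'n"
  assumes "X \<longlonglongrightarrow> L" "eventually (\<lambda>n. stochastic (X n)) sequentially"
  shows "stochastic L"
proof -
  have "0 \<le> L$i$j" for i j
  proof (rule tendsto_lowerbound)
    show "(\<lambda>n. X n $ i $ j) \<longlonglongrightarrow> L $ i $ j" by (intro tendsto_vec_nth assms(1))
    show "eventually (\<lambda>n. 0 \<le> X n $ i $ j) sequentially"
      using assms(2) by eventually_elim (simp add: stochastic_def)
  qed simp
  moreover have "(\<Sum>j\<in>UNIV. L$i$j) = 1" for i
  proof (rule tendsto_unique)
    show "(\<lambda>n. \<Sum>j\<in>UNIV. X n $ i $ j) \<longlonglongrightarrow> (\<Sum>j\<in>UNIV. L$i$j)"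
      by (intro tendsto_sum tendsto_vec_nth assms(1))
    show "(\<lambda>n. \<Sum>j\<in>UNIV. X n $ i $ j) \<longlonglongrightarrow> 1"
      by (rule tendsto_eventually, use assms(2) in eventually_elim) (simp add: stochastic_def)
  qed simp
  ultimately show ?thesis by (simp add: stochastic_def)
qed

lemma mat_power_commute: "mat_power M n ** M = M ** mat_power M n"
  by (induction n) (simp_all add: matrix_mul_assoc[symmetric])

lemma matrix_mult_sum_left: "sum f S ** (B::real^'n^'n) = (\<Sum>n\<in>S. f n ** B)"
  by (cases "finite S", induction S rule: finite_induct)
     (simp_all add: vec_eq_iff matrix_matrix_mult_def sum.distrib distrib_right)

lemma matrix_mult_sum_right: "(B::real^'n^'n) ** sum f S = (\<Sum>n\<in>S. B ** f n)"
  by (cases "finite S", induction S rule: finite_induct)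
     (simp_all add: vec_eq_iff matrix_matrix_mult_def sum.distrib distrib_left)

lemma matrix_mult_scaleR_right: "(A::real^'n^'n) ** (c *\<^sub>R B) = c *\<^sub>R (A ** B)"
  by (simp add: matrix_scalar_ac scalar_matrix_assoc[symmetric])

lemma tendsto_matrix_mult_left:
  assumes "(f \<longlongrightarrow> (A::real^'n^'n)) F" shows "((\<lambda>x. f x ** B) \<longlongrightarrow> A ** B) F"
  unfolding matrix_matrix_mult_def
  by (intro vec_tendstoI) (simp, intro tendsto_intros assms)

lemma tendsto_matrix_mult_right:
  assumes "(f \<longlongrightarrow> (A::real^'n^'n)) F" shows "((\<lambda>x. B ** f x) \<longlongrightarrow> B ** A) F"
  unfolding matrix_matrix_mult_def
  by (intro vec_tendstoI) (simp, intro tendsto_intros assms)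

lemma norm_matrix_le_sum_abs: "norm (A::real^'n^'m) \<le> (\<Sum>i\<in>UNIV. \<Sum>j\<in>UNIV. \<bar>A$i$j\<bar>)"
proof -
  have "norm A \<le> (\<Sum>i\<in>UNIV. norm (A$i))"
    unfolding norm_vec_def by (rule L2_set_le_sum) simp
  also have "\<dots> \<le> (\<Sum>i\<in>UNIV. \<Sum>j\<in>UNIV. \<bar>A$i$j\<bar>)"
    by (intro sum_mono norm_le_l1_cart)
  finally show ?thesis .
qed

lemma cesaro_mean_entry: "cesaro_mean M N $ i $ j = (\<Sum>n<N. mat_power M n $ i $ j) / real N"
  by (simp add: cesaro_mean_def)

lemma stochastic_cesaro_mean:
  assumes "stochastic M" "N > 0" shows "stochastic (cesaro_mean M N)"
proof -
  have "(\<Sum>j\<in>UNIV. cesaro_mean M N $ i $ j) = 1" for i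
  proof -
    have "(\<Sum>j\<in>UNIV. cesaro_mean M N $ i $ j) = (\<Sum>j\<in>UNIV. \<Sum>n<N. mat_power M n $ i $ j) / real N"
      by (simp add: cesaro_mean_entry sum_divide_distrib[symmetric])
    also have "\<dots> = (\<Sum>n<N. \<Sum>j\<in>UNIV. mat_power M n $ i $ j) / real N"
      by (subst sum.swap) simp
    also have "\<dots> = 1"
      using stochastic_mat_power[OF assms(1)] assms(2) by (simp add: stochastic_def)
    finally show ?thesis .
  qed
  moreover have "0 \<le> cesaro_mean M N $ i $ j" for i j
    using stochastic_mat_power[OF assms(1)] unfolding cesaro_mean_entry stochastic_def
    by (intro divide_nonneg_nonneg sum_nonneg) auto
  ultimately show ?thesis by (simp add: stochastic_def)
qed

lemma bounded_cesaro_mean: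
  fixes M :: "real^'n^'n" assumes "stochastic M" shows "bounded (range (cesaro_mean M))"
proof -
  have "norm (cesaro_mean M N) \<le> real (CARD('n) * CARD('n))" for N
  proof (cases "N = 0")
    case True then show ?thesis by (simp add: cesaro_mean_def)
  next
    case False
    then have st: "stochastic (cesaro_mean M N)" using stochastic_cesaro_mean assms by auto
    have "(\<Sum>i\<in>UNIV. \<Sum>j\<in>UNIV. \<bar>cesaro_mean M N$i$j\<bar>) \<le> (\<Sum>i\<in>(UNIV::'n set). \<Sum>j\<in>(UNIV::'n set). 1)"
      using st stochastic_entry_le_1[OF st] unfolding stochastic_def by (intro sum_mono) auto
    then show ?thesis using norm_matrix_le_sum_abs[of "cesaro_mean M N"] by simp
  qed
  then show ?thesis unfolding bounded_iff by blast
qed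

lemma cesaro_mean_commute: "M ** cesaro_mean M N = cesaro_mean M N ** M"
  by (simp add: cesaro_mean_def matrix_mult_scaleR_right scalar_matrix_assoc[symmetric]
      matrix_mult_sum_left matrix_mult_sum_right mat_power_commute)

text \<open>The mean telescopes: \<open>cesaro_mean M N ** M - cesaro_mean M N = (M\<^sup>N - 1) / N\<close>, and the
  entries of \<open>M\<^sup>N - 1\<close> stay bounded.\<close>
lemma cesaro_mean_mult_diff_tendsto_0:
  assumes "stochastic M"
  shows "(\<lambda>N. cesaro_mean M N ** M - cesaro_mean M N) \<longlonglongrightarrow> 0"
proof -
  have eq: "cesaro_mean M N ** M - cesaro_mean M N = (1 / real N) *\<^sub>R (mat_power M N - mat 1)" for N
  proof -
    have "(\<Sum>n<N. mat_power M n ** M) - (\<Sum>n<N. mat_power M n) = mat_power M N - mat 1"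
      using sum_lessThan_telescope[of "mat_power M" N] by (simp add: sum_subtractf)
    then show ?thesis
      unfolding cesaro_mean_def scalar_matrix_assoc[symmetric] matrix_mult_sum_left
      by (metis scaleR_diff_right)
  qed
  show ?thesis unfolding eq
  proof (rule vec_tendstoI, rule vec_tendstoI)
    fix i j
    have "\<bar>mat_power M N $ i $ j - mat 1 $ i $ j\<bar> \<le> 1" for N
      using stochastic_mat_power[OF assms, of N] stochastic_entry_le_1[OF stochastic_mat_power[OF assms]]
      by (auto simp: mat_def stochastic_def)
    then have "\<forall>\<^sub>F N in sequentially. norm ((mat_power M N $ i $ j - mat 1 $ i $ j) / real N) \<le> 1 / real N"
      by (auto simp: abs_divide divide_right_mono)
    then have "(\<lambda>N. (mat_power M N $ i $ j - mat 1 $ i $ j) / real N) \<longlonglongrightarrow> 0"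
      by (rule Lim_null_comparison) (rule lim_1_over_n)
    then show "(\<lambda>N. ((1 / real N) *\<^sub>R (mat_power M N - mat 1)) $ i $ j) \<longlonglongrightarrow> 0 $ i $ j"
      by simp
  qed
qed

lemma eventually_strict_mono_pos:
  "strict_mono (r :: nat \<Rightarrow> nat) \<Longrightarrow> eventually (\<lambda>n. 0 < r n) sequentially"
  unfolding eventually_sequentially using seq_suble[of r] by (metis Suc_le_eq le_trans)

lemma cesaro_limit_pointD:
  fixes M :: "real^'n^'n"
  assumes "stochastic M" "strict_mono r" "(\<lambda>n. cesaro_mean M (r n)) \<longlonglongrightarrow> L"
  shows "L ** M = L" "M ** L = L" "stochastic L"
proof -
  have "(\<lambda>n. cesaro_mean M (r n) ** M - cesaro_mean M (r n)) \<longlonglongrightarrow> 0"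
    using LIMSEQ_subseq_LIMSEQ[OF cesaro_mean_mult_diff_tendsto_0[OF assms(1)] assms(2)]
    by (simp add: o_def)
  moreover have "(\<lambda>n. cesaro_mean M (r n) ** M - cesaro_mean M (r n)) \<longlonglongrightarrow> L ** M - L"
    by (intro tendsto_diff tendsto_matrix_mult_left assms(3))
  moreover have "(\<lambda>n. cesaro_mean M (r n) ** M - cesaro_mean M (r n)) \<longlonglongrightarrow> M ** L - L"
    unfolding cesaro_mean_commute[symmetric]
    by (intro tendsto_diff tendsto_matrix_mult_right assms(3))
  ultimately show "L ** M = L" "M ** L = L" using LIMSEQ_unique by fastforce+
  show "stochastic L"
  proof (rule stochastic_limit[OF assms(3)])
    show "eventually (\<lambda>n. stochastic (cesaro_mean M (r n))) sequentially"
      using eventually_strict_mono_pos[OF assms(2)]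
      by eventually_elim (rule stochastic_cesaro_mean[OF assms(1)])
  qed
qed

lemma cesaro_mean_fixed_left:
  fixes L :: "real^'n^'n" assumes "M ** L = L" "N > 0" shows "cesaro_mean M N ** L = L"
proof -
  have "mat_power M n ** L = L" for n
    using assms(1) by (induction n) (simp_all add: matrix_mul_assoc[symmetric])
  then show ?thesis using assms(2)
    by (simp add: cesaro_mean_def scalar_matrix_assoc[symmetric] matrix_mult_sum_left
        sum_constant_scaleR del: sum_constant)
qed

lemma cesaro_mean_fixed_right:
  fixes L :: "real^'n^'n" assumes "L ** M = L" "N > 0" shows "L ** cesaro_mean M N = L"
proof -
  have "L ** mat_power M n = L" for n
    using assms(1) by (induction n) (simp_all add: matrix_mul_assoc)
  then show ?thesis using assms(2)
    by (simp add: cesaro_mean_def matrix_mult_scaleR_right matrix_mult_sum_right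
        sum_constant_scaleR del: sum_constant)
qed

text \<open>Two limit points satisfy \<open>L\<^sub>2 ** L\<^sub>1 = L\<^sub>2\<close> and \<open>L\<^sub>2 ** L\<^sub>1 = L\<^sub>1\<close>, by passing to the
  limit along one subsequence while the other limit point is fixed by every mean.\<close>
lemma cesaro_limit_point_unique:
  fixes M :: "real^'n^'n"
  assumes "stochastic M"
    and "strict_mono r\<^sub>1" "(\<lambda>n. cesaro_mean M (r\<^sub>1 n)) \<longlonglongrightarrow> L\<^sub>1"
    and "strict_mono r\<^sub>2" "(\<lambda>n. cesaro_mean M (r\<^sub>2 n)) \<longlonglongrightarrow> L\<^sub>2"
  shows "L\<^sub>1 = L\<^sub>2"
proof -
  note L\<^sub>1 = cesaro_limit_pointD[OF assms(1-3)]
  note L\<^sub>2 = cesaro_limit_pointD[OF assms(1,4,5)]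
  have "L\<^sub>2 ** L\<^sub>1 = L\<^sub>2"
  proof (rule tendsto_unique)
    show "(\<lambda>n. L\<^sub>2 ** cesaro_mean M (r\<^sub>1 n)) \<longlonglongrightarrow> L\<^sub>2 ** L\<^sub>1"
      by (intro tendsto_matrix_mult_right assms(3))
    show "(\<lambda>n. L\<^sub>2 ** cesaro_mean M (r\<^sub>1 n)) \<longlonglongrightarrow> L\<^sub>2"
      by (rule tendsto_eventually, use eventually_strict_mono_pos[OF assms(2)] in eventually_elim)
         (rule cesaro_mean_fixed_right[OF L\<^sub>2(1)])
  qed simp
  moreover have "L\<^sub>2 ** L\<^sub>1 = L\<^sub>1"
  proof (rule tendsto_unique)
    show "(\<lambda>n. cesaro_mean M (r\<^sub>2 n) ** L\<^sub>1) \<longlonglongrightarrow> L\<^sub>2 ** L\<^sub>1"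
      by (intro tendsto_matrix_mult_left assms(5))
    show "(\<lambda>n. cesaro_mean M (r\<^sub>2 n) ** L\<^sub>1) \<longlonglongrightarrow> L\<^sub>1"
      by (rule tendsto_eventually, use eventually_strict_mono_pos[OF assms(4)] in eventually_elim)
         (rule cesaro_mean_fixed_left[OF L\<^sub>1(2)])
  qed simp
  ultimately show ?thesis by simp
qed

lemma bounded_LIMSEQ_if_unique_subseq_limit:
  fixes f :: "nat \<Rightarrow> 'a::heine_borel"
  assumes "bounded (range f)"
    and "\<And>r l. strict_mono r \<Longrightarrow> (\<lambda>n. f (r n)) \<longlonglongrightarrow> l \<Longrightarrow> l = L"
  shows "f \<longlonglongrightarrow> L"
proof (rule ccontr)
  assume "\<not> f \<longlonglongrightarrow> L"
  then obtain e where e: "e > 0" "\<forall>N. \<exists>n\<ge>N. e \<le> dist (f n) L"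
    unfolding lim_sequentially by (auto simp: not_less)
  then have "infinite {n. e \<le> dist (f n) L}"
    unfolding infinite_nat_iff_unbounded_le by simp
  then obtain s :: "nat \<Rightarrow> nat" where s: "strict_mono s" "\<And>n. e \<le> dist (f (s n)) L"
    using infinite_enumerate by (metis mem_Collect_eq)
  have "bounded (range (f \<circ> s))"
    by (rule bounded_subset[OF assms(1)]) auto
  then obtain t l where t: "strict_mono t" "((f \<circ> s) \<circ> t) \<longlonglongrightarrow> l"
    using bounded_imp_convergent_subsequence by blast
  have "l = L"
    using t(2) by (intro assms(2)[of "s \<circ> t"] strict_mono_o s(1) t(1)) (simp add: o_def)
  moreover have "(\<lambda>n. dist (f (s (t n))) L) \<longlonglongrightarrow> dist l L"
    using t(2) by (intro tendsto_dist) (simp_all add: o_def)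
  ultimately have "(\<lambda>n. dist (f (s (t n))) L) \<longlonglongrightarrow> 0" by simp
  moreover have "\<forall>n. e \<le> dist (f (s (t n))) L" using s(2) by blast
  ultimately have "e \<le> 0" by (intro LIMSEQ_le_const[of _ 0]) auto
  then show False using e(1) by simp
qed

lemma cesaro_mean_converges:
  fixes M :: "real^'n^'n"
  assumes "stochastic M"
  obtains L where "cesaro_mean M \<longlonglongrightarrow> L" "L ** M = L" "stochastic L"
proof -
  obtain L r where r: "strict_mono r" "(\<lambda>n. cesaro_mean M (r n)) \<longlonglongrightarrow> L"
    using bounded_imp_convergent_subsequence[OF bounded_cesaro_mean[OF assms]]
    by (auto simp: o_def)
  have "cesaro_mean M \<longlonglongrightarrow> L"
    using bounded_cesaro_mean[OF assms]
    by (rule bounded_LIMSEQ_if_unique_subseq_limit) (use cesaro_limit_point_unique[OF assms _ _ r] in blast)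
  then show ?thesis using that cesaro_limit_pointD[OF assms r] by blast
qed


section \<open>Replicator dynamics near an evolutionarily unstable vertex\<close>

lemma EUS_margin:
  fixes A :: "'i::finite \<Rightarrow> 'i \<Rightarrow> real"
  assumes "EUS A i\<^sub>0"
  obtains d where "d > 0" "\<And>j. j \<noteq> i\<^sub>0 \<Longrightarrow> d \<le> A j i\<^sub>0 - A i\<^sub>0 i\<^sub>0"
proof (cases "UNIV - {i\<^sub>0} = {}")
  case True
  then show ?thesis using that[of 1] by auto
next
  case False
  define d where "d = Min ((\<lambda>j. A j i\<^sub>0 - A i\<^sub>0 i\<^sub>0) ` (UNIV - {i\<^sub>0}))"
  have "d > 0"
    unfolding d_def using False assms by (subst Min_gr_iff) (auto simp: EUS_def)
  moreover have "d \<le> A j i\<^sub>0 - A i\<^sub>0 i\<^sub>0" if "j \<noteq> i\<^sub>0" for j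
    unfolding d_def using that by (intro Min_le) auto
  ultimately show ?thesis using that by blast
qed

lemma sum_remove_UNIV: "(\<Sum>i\<in>UNIV. f i) = f i\<^sub>0 + (\<Sum>i\<in>UNIV - {i\<^sub>0}. f i)"
  for f :: "'i::finite \<Rightarrow> real"
  by (rule sum.remove) auto

lemma simplex_sum_others: "\<pi> \<in> simplex \<Longrightarrow> (\<Sum>i\<in>UNIV - {i\<^sub>0}. \<pi> i) = 1 - \<pi> i\<^sub>0"
  using sum_remove_UNIV[of \<pi> i\<^sub>0] by (simp add: simplex_def)

lemma A_vs_mix_minus_A_mix_mix:
  assumes "\<pi> \<in> simplex"
  shows "A_vs_mix A i\<^sub>0 \<pi> - A_mix_mix A \<pi> =
    (\<Sum>i\<in>UNIV - {i\<^sub>0}. \<pi> i * (A_vs_mix A i\<^sub>0 \<pi> - A_vs_mix A i \<pi>))"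
proof -
  have "A_vs_mix A i\<^sub>0 \<pi> - A_mix_mix A \<pi> = (\<Sum>i\<in>UNIV. \<pi> i * (A_vs_mix A i\<^sub>0 \<pi> - A_vs_mix A i \<pi>))"
    using assms by (simp add: simplex_def A_mix_mix_def algebra_simps sum_subtractf
        sum_distrib_right[symmetric])
  then show ?thesis by (simp add: sum_remove_UNIV[where i\<^sub>0 = i\<^sub>0])
qed

lemma A_vs_mix_deficit:
  fixes A :: "'i::finite \<Rightarrow> 'i \<Rightarrow> real"
  assumes "\<pi> \<in> simplex" "\<And>i j. \<bar>A i j\<bar> \<le> K" "d \<le> A i i\<^sub>0 - A i\<^sub>0 i\<^sub>0"
  shows "A_vs_mix A i\<^sub>0 \<pi> - A_vs_mix A i \<pi> \<le> - \<pi> i\<^sub>0 * d + (1 - \<pi> i\<^sub>0) * (2 * K)"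
proof -
  have nn: "0 \<le> \<pi> j" for j using assms(1) by (simp add: simplex_def)
  have "A_vs_mix A i\<^sub>0 \<pi> - A_vs_mix A i \<pi> = (\<Sum>j\<in>UNIV. \<pi> j * (A i\<^sub>0 j - A i j))"
    by (simp add: A_vs_mix_def algebra_simps sum_subtractf)
  also have "\<dots> = \<pi> i\<^sub>0 * (A i\<^sub>0 i\<^sub>0 - A i i\<^sub>0) + (\<Sum>j\<in>UNIV - {i\<^sub>0}. \<pi> j * (A i\<^sub>0 j - A i j))"
    by (rule sum_remove_UNIV)
  also have "\<dots> \<le> \<pi> i\<^sub>0 * (- d) + (\<Sum>j\<in>UNIV - {i\<^sub>0}. \<pi> j * (2 * K))"
  proof (intro add_mono sum_mono mult_left_mono nn)
    show "A i\<^sub>0 i\<^sub>0 - A i i\<^sub>0 \<le> - d" using assms(3) by simp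
    show "A i\<^sub>0 j - A i j \<le> 2 * K" for j using assms(2)[of i\<^sub>0 j] assms(2)[of i j] by linarith
  qed
  also have "\<dots> = - \<pi> i\<^sub>0 * d + (1 - \<pi> i\<^sub>0) * (2 * K)"
    by (simp add: sum_distrib_right[symmetric] simplex_sum_others[OF assms(1)])
  finally show ?thesis .
qed

lemma EUS_repelling:
  fixes A :: "'i::finite \<Rightarrow> 'i \<Rightarrow> real"
  assumes "EUS A i\<^sub>0"
  shows "\<exists>\<epsilon>>0. \<forall>\<pi>\<in>simplex. 1 - \<epsilon> \<le> \<pi> i\<^sub>0 \<and> \<pi> i\<^sub>0 < 1 \<longrightarrow> replicator_rhs A \<pi> i\<^sub>0 < 0"
proof -
  obtain d where d: "d > 0" "\<And>j. j \<noteq> i\<^sub>0 \<Longrightarrow> d \<le> A j i\<^sub>0 - A i\<^sub>0 i\<^sub>0"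
    using EUS_margin[OF assms] by blast
  define K where "K = (\<Sum>i\<in>UNIV. \<Sum>j\<in>UNIV. \<bar>A i j\<bar>)"
  have K: "\<bar>A i j\<bar> \<le> K" for i j
    unfolding K_def using member_le_sum[of i UNIV "\<lambda>i. \<Sum>j\<in>UNIV. \<bar>A i j\<bar>"]
      member_le_sum[of j UNIV "\<lambda>j. \<bar>A i j\<bar>"] by (force intro: sum_nonneg)
  have K0: "K \<ge> 0" unfolding K_def by (intro sum_nonneg) auto
  define \<epsilon> where "\<epsilon> = min (1/2) (d / (8 * K + 1))"
  have "\<epsilon> > 0" using d(1) K0 by (simp add: \<epsilon>_def)
  moreover have "replicator_rhs A \<pi> i\<^sub>0 < 0"
    if \<pi>: "\<pi> \<in> simplex" and near: "1 - \<epsilon> \<le> \<pi> i\<^sub>0" "\<pi> i\<^sub>0 < 1" for \<pi>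
  proof -
    have "2 * K * \<epsilon> \<le> 2 * K * (d / (8 * K + 1))"
      using K0 by (intro mult_left_mono) (auto simp: \<epsilon>_def)
    also have "\<dots> \<le> d / 4" using K0 d(1) by (simp add: field_simps)
    finally have "(1 - \<pi> i\<^sub>0) * (2 * K) \<le> d / 4"
      using near(1) K0 mult_right_mono[of "1 - \<pi> i\<^sub>0" \<epsilon> "2 * K"] by (simp add: mult.commute)
    moreover have "\<pi> i\<^sub>0 \<ge> 1/2" using near(1) by (simp add: \<epsilon>_def)
    ultimately have deficit: "A_vs_mix A i\<^sub>0 \<pi> - A_vs_mix A i \<pi> \<le> - d / 4" if "i \<noteq> i\<^sub>0" for i
      using A_vs_mix_deficit[where A = A, OF \<pi> K d(2)[OF that]] mult_right_mono[of "1/2" "\<pi> i\<^sub>0" d] d(1)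
      by linarith
    have "A_vs_mix A i\<^sub>0 \<pi> - A_mix_mix A \<pi> \<le> (\<Sum>i\<in>UNIV - {i\<^sub>0}. \<pi> i * (- d / 4))"
      unfolding A_vs_mix_minus_A_mix_mix[OF \<pi>]
      using \<pi> deficit by (intro sum_mono mult_left_mono) (auto simp: simplex_def)
    also have "\<dots> = (1 - \<pi> i\<^sub>0) * (- d / 4)"
      by (simp only: sum_distrib_right[symmetric] simplex_sum_others[OF \<pi>])
    also have "\<dots> < 0" using d(1) near(2) by (simp add: mult_pos_neg)
    finally show ?thesis
      using \<open>\<pi> i\<^sub>0 \<ge> 1/2\<close> by (simp add: replicator_rhs_def mult_pos_neg)
  qed
  ultimately show ?thesis by blast
qed


section \<open>The iterated Prisoner's Dilemma as a Markov chain\<close>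

lemma UNIV_outcome: "(UNIV :: outcome set) = {CC, CD, DC, DD}"
  using outcome.exhaust by auto

instance outcome :: finite
  by standard (simp add: UNIV_outcome)

lemma sum_UNIV_outcome: "(\<Sum>w\<in>UNIV. f w) = osum f"
  by (simp add: UNIV_outcome osum_def)

definition trans_matrix :: "(outcome \<Rightarrow> real) \<Rightarrow> (outcome \<Rightarrow> real) \<Rightarrow> real^outcome^outcome" where
  "trans_matrix p q = (\<chi> w w'. trans p q w w')"

definition stationary_dist :: "(outcome \<Rightarrow> real) \<Rightarrow> (outcome \<Rightarrow> real) \<Rightarrow> (outcome \<Rightarrow> real) \<Rightarrow> bool" where
  "stationary_dist p q l \<longleftrightarrow>
     (\<forall>w. 0 \<le> l w) \<and> osum l = 1 \<and> (\<forall>w'. l w' = osum (\<lambda>w. l w * trans p q w w'))"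

text \<open>The balance equations must not be given to the simplifier: they loop.\<close>
lemma stationary_distD:
  assumes "stationary_dist p q l"
  shows "0 \<le> l w" "osum l = 1" "l w' = osum (\<lambda>w. l w * trans p q w w')"
  using assms unfolding stationary_dist_def by blast+

lemma stochastic_trans_matrix:
  assumes "is_mem1_vector p" "is_mem1_vector q"
  shows "stochastic (trans_matrix p q)"
proof -
  have "0 \<le> trans p q w w'" for w w'
    using assms unfolding is_mem1_vector_def trans_def play_prob_def by auto
  moreover have "osum (trans p q w) = 1" for w
    by (simp add: osum_def trans_def play_prob_def algebra_simps)
  ultimately show ?thesis by (simp add: stochastic_def trans_matrix_def sum_UNIV_outcome)
qed

lemma outcome_dist_eq_mat_power:
  "outcome_dist X Y n w' = mat_power (trans_matrix (fst X) (fst Y)) n $ mk_outcome (snd X) (snd Y) $ w'"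
  by (induction n arbitrary: w')
     (simp_all add: mat_def matrix_matrix_mult_def sum_UNIV_outcome trans_matrix_def)

text \<open>The rows of the Cesaro limit of the transition matrix are stationary distributions,
  and the long-run payoff is the payoff averaged over the row of the initial outcome.\<close>
lemma longrun_payoff_stationary:
  assumes "is_mem1_vector (fst X)" "is_mem1_vector (fst Y)"
  obtains l where "stationary_dist (fst X) (fst Y) l"
    "longrun_payoff R P X Y = osum (\<lambda>w. l w * SX R P w)"
proof -
  define M where "M = trans_matrix (fst X) (fst Y)"
  define w\<^sub>0 where "w\<^sub>0 = mk_outcome (snd X) (snd Y)"
  obtain L where L: "cesaro_mean M \<longlonglongrightarrow> L" "L ** M = L" "stochastic L"
    using stochastic_trans_matrix[OF assms] unfolding M_def by (rule cesaro_mean_converges)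
  define l where "l w = L $ w\<^sub>0 $ w" for w
  have "(\<Sum>n<N. expected_payoff R P X Y n) = osum (\<lambda>w. (\<Sum>n<N. mat_power M n $ w\<^sub>0 $ w) * SX R P w)"
    for N
    by (simp add: expected_payoff_def outcome_dist_eq_mat_power M_def w\<^sub>0_def osum_def
        sum.distrib sum_distrib_right)
  then have "(\<Sum>n<N. expected_payoff R P X Y n) / real N = osum (\<lambda>w. cesaro_mean M N $ w\<^sub>0 $ w * SX R P w)"
    for N
    by (simp add: cesaro_mean_entry osum_def add_divide_distrib)
  moreover have "(\<lambda>N. osum (\<lambda>w. cesaro_mean M N $ w\<^sub>0 $ w * SX R P w)) \<longlonglongrightarrow> osum (\<lambda>w. l w * SX R P w)"
    unfolding osum_def l_def by (intro tendsto_intros L(1))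
  ultimately have "(\<lambda>N. (\<Sum>n<N. expected_payoff R P X Y n) / real N) \<longlonglongrightarrow> osum (\<lambda>w. l w * SX R P w)"
    by simp
  then have payoff: "longrun_payoff R P X Y = osum (\<lambda>w. l w * SX R P w)"
    unfolding longrun_payoff_def by (rule limI)
  have "l w' = osum (\<lambda>w. l w * trans (fst X) (fst Y) w w')" for w'
    using arg_cong[OF L(2), of "\<lambda>L. L $ w\<^sub>0 $ w'"]
    by (simp add: matrix_matrix_mult_def sum_UNIV_outcome l_def M_def trans_matrix_def)
  moreover have "\<forall>w. 0 \<le> l w" "osum l = 1"
    using L(3) by (auto simp: stochastic_def l_def sum_UNIV_outcome[symmetric])
  ultimately have "stationary_dist (fst X) (fst Y) l" unfolding stationary_dist_def by blast
  then show ?thesis using payoff by (rule that)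
qed

lemma outcome_dist_firm_defector_self:
  assumes "firm (fst X)" "snd X = False"
  shows "outcome_dist X X n w = (if w = DD then 1 else 0)"
  using assms
  by (induction n arbitrary: w) (auto simp: mk_outcome_def firm_def osum_def trans_def
      play_prob_def elim: own_play.elims other_play.elims)

lemma longrun_payoff_firm_defector_self:
  assumes "firm (fst X)" "snd X = False"
  shows "longrun_payoff R P X X = P"
proof -
  have "\<forall>N\<ge>1. (\<Sum>n<N. expected_payoff R P X X n) / real N = P"
    by (simp add: expected_payoff_def outcome_dist_firm_defector_self[OF assms] osum_def)
  then have "(\<lambda>N. (\<Sum>n<N. expected_payoff R P X X n) / real N) \<longlonglongrightarrow> P"
    by (intro tendsto_eventually) (auto simp: eventually_sequentially)
  then show ?thesis unfolding longrun_payoff_def by (rule limI)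
qed

text \<open>Akin's lemma: in a stationary state, the frequency with which the opponent (playing q)
  cooperated in the previous round equals the frequency with which it cooperates now.\<close>
lemma stationary_dist_opponent_coop:
  assumes "stationary_dist p q l"
  shows "osum (\<lambda>w. l w * tilde (swap_outcome w)) = osum (\<lambda>w. l w * q (swap_outcome w))"
proof -
  have "osum (\<lambda>w. l w * q (swap_outcome w))
      = osum (\<lambda>w. l w * trans p q w CC) + osum (\<lambda>w. l w * trans p q w DC)"
    by (simp add: osum_def trans_def play_prob_def algebra_simps)
  also have "\<dots> = l CC + l DC"
    using stationary_distD(3)[OF assms, of CC] stationary_distD(3)[OF assms, of DC] by linarith
  also have "\<dots> = osum (\<lambda>w. l w * tilde (swap_outcome w))" by (simp add: osum_def)
  finally show ?thesis ..
qed

lemma press_dyson_relation: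
  assumes "stationary_dist p q l" "PD_decomp R P q \<alpha> \<beta> \<gamma> \<delta>"
  shows "\<alpha> * osum (\<lambda>w. l w * SY R P w) + \<beta> * osum (\<lambda>w. l w * SX R P w) + \<gamma>
           + \<delta> * osum (\<lambda>w. l w * e23 w) = 0"
proof -
  have "q (swap_outcome w) - tilde (swap_outcome w) = \<alpha> * SY R P w + \<beta> * SX R P w + \<gamma> + \<delta> * e23 w"
    for w using assms(2) unfolding PD_decomp_def
    by (cases w) (metis swap_outcome.simps SX.simps SY.simps e23.simps)+
  then have "osum (\<lambda>w. l w * (\<alpha> * SY R P w + \<beta> * SX R P w + \<gamma> + \<delta> * e23 w)) = 0"
    using stationary_dist_opponent_coop[OF assms(1)] by (simp add: osum_def algebra_simps)
  moreover have "osum (\<lambda>w. l w * (\<alpha> * SY R P w + \<beta> * SX R P w + \<gamma> + \<delta> * e23 w))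
      = \<alpha> * osum (\<lambda>w. l w * SY R P w) + \<beta> * osum (\<lambda>w. l w * SX R P w) + \<gamma> * osum l
        + \<delta> * osum (\<lambda>w. l w * e23 w)"
    by (simp add: osum_def algebra_simps)
  ultimately show ?thesis using stationary_distD(2)[OF assms(1)] by simp
qed

lemma stationary_dist_DD_lt_1:
  assumes "is_mem1_vector p" "is_mem1_vector q" "p DD \<noteq> 0" "stationary_dist p q l"
  shows "l DD < 1"
proof (rule ccontr)
  assume "\<not> l DD < 1"
  then have l: "l DD = 1" "l CC = 0" "l CD = 0" "l DC = 0"
    using stationary_distD(1)[OF assms(4), of CC] stationary_distD(1)[OF assms(4), of CD]
      stationary_distD(1)[OF assms(4), of DC] stationary_distD(2)[OF assms(4)]
    unfolding osum_def by linarith+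
  have "1 = osum (\<lambda>w. l w * trans p q w DD)"
    using stationary_distD(3)[OF assms(4), of DD] l(1) by linarith
  also have "\<dots> = trans p q DD DD" using l by (simp add: osum_def)
  finally have "trans p q DD DD = 1" ..
  moreover have "(1 - p DD) * (1 - q DD) \<le> 1 - p DD" "p DD > 0"
    using assms(1-3) unfolding is_mem1_vector_def
    by (auto simp: less_le intro: mult_left_le)
  ultimately show False unfolding trans_def play_prob_def by simp
qed

lemma payoff_sum_gt_twice_punishment:
  assumes "\<forall>w. 0 \<le> l w" "osum l = 1" "l DD < 1" "P < R" "P < 1/2"
  shows "osum (\<lambda>w. l w * SX R P w) + osum (\<lambda>w. l w * SY R P w) > 2 * P"
proof -
  have "osum (\<lambda>w. l w * SX R P w) + osum (\<lambda>w. l w * SY R P w) - 2 * P * osum l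
      = 2 * l CC * (R - P) + (l CD + l DC) * (1 - 2 * P)"
    by (simp add: osum_def algebra_simps)
  then have "osum (\<lambda>w. l w * SX R P w) + osum (\<lambda>w. l w * SY R P w) - 2 * P
      = 2 * l CC * (R - P) + (l CD + l DC) * (1 - 2 * P)"
    using assms(2) by simp
  moreover have "0 < l CC \<or> 0 < l CD + l DC"
    using assms(1-3) unfolding osum_def by (metis add_nonneg_nonneg add.assoc less_add_same_cancel2
        less_eq_real_def not_less)
  then have "0 < 2 * l CC * (R - P) \<or> 0 < (l CD + l DC) * (1 - 2 * P)"
    using assms(4,5) by auto
  moreover have "0 \<le> 2 * l CC * (R - P)" "0 \<le> (l CD + l DC) * (1 - 2 * P)"
    using assms(1,4,5) by simp_all
  ultimately show ?thesis by linarith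
qed

text \<open>With \<open>\<alpha> > 0\<close> and \<open>\<alpha> + \<beta> < 0\<close> (from the dd component \<open>(\<alpha> + \<beta>) P + \<gamma> = 0\<close>), the
  relation \<open>\<alpha> (s\<^sub>Y - P) + \<beta> (s\<^sub>X - P) = 0\<close> excludes \<open>s\<^sub>X \<le> P\<close> once \<open>s\<^sub>X + s\<^sub>Y > 2P\<close>.\<close>
lemma extortion_payoff_gt_punishment:
  fixes \<alpha> \<beta> \<gamma> P s\<^sub>X s\<^sub>Y :: real
  assumes "\<alpha> > 0" "\<gamma> > 0" "P > 0" "\<alpha> * P + \<beta> * P + \<gamma> = 0"
    and "\<alpha> * s\<^sub>Y + \<beta> * s\<^sub>X + \<gamma> = 0" "s\<^sub>X + s\<^sub>Y > 2 * P"
  shows "s\<^sub>X > P"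
proof (rule ccontr)
  assume "\<not> s\<^sub>X > P"
  have "(\<alpha> + \<beta>) * P < 0" using assms(2,4) by (simp add: algebra_simps)
  then have "\<alpha> + \<beta> < 0" using assms(3) by (simp add: mult_less_0_iff)
  then have "\<beta> * (s\<^sub>X - P) \<ge> 0" using \<open>\<not> s\<^sub>X > P\<close> assms(1) by (simp add: mult_nonpos_nonpos)
  moreover have "\<alpha> * (s\<^sub>Y - P) + \<beta> * (s\<^sub>X - P) = 0" using assms(4,5) by (simp add: algebra_simps)
  ultimately have "\<alpha> * (s\<^sub>Y - P) \<le> 0" by linarith
  then have "s\<^sub>Y \<le> P" using assms(1) by (simp add: mult_le_0_iff)
  then show False using \<open>\<not> s\<^sub>X > P\<close> assms(6) by simp
qed

lemma longrun_payoff_against_extortioner_gt: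
  assumes "0 < P" "P < R" "P < 1/2"
    and "is_mem1_vector (fst X)" "is_mem1_vector (fst Y)" "\<not> firm (fst X)"
    and "extortionate R P (fst Y)"
  shows "longrun_payoff R P X Y > P"
proof -
  obtain \<alpha> \<beta> \<gamma> where dec: "PD_decomp R P (fst Y) \<alpha> \<beta> \<gamma> 0" "\<gamma> > 0" "\<alpha> / \<gamma> > 0"
    and firmY: "fst Y DD = 0"
    using assms(7) unfolding extortionate_def firm_def by blast
  obtain l where l: "stationary_dist (fst X) (fst Y) l"
    and payoff: "longrun_payoff R P X Y = osum (\<lambda>w. l w * SX R P w)"
    using longrun_payoff_stationary[OF assms(4,5)] by blast
  have "fst Y DD - tilde DD = \<alpha> * SX R P DD + \<beta> * SY R P DD + \<gamma> + 0 * e23 DD"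
    using dec(1) unfolding PD_decomp_def by blast
  then have dd: "\<alpha> * P + \<beta> * P + \<gamma> = 0" using firmY by simp
  have "\<alpha> > 0" using dec(2,3) by (simp add: zero_less_divide_iff)
  have relation: "\<alpha> * osum (\<lambda>w. l w * SY R P w) + \<beta> * osum (\<lambda>w. l w * SX R P w) + \<gamma> = 0"
    using press_dyson_relation[OF l dec(1)] by simp
  have "l DD < 1"
    using assms(6) by (intro stationary_dist_DD_lt_1[OF assms(4,5) _ l]) (simp add: firm_def)
  then have "osum (\<lambda>w. l w * SX R P w) + osum (\<lambda>w. l w * SY R P w) > 2 * P"
    using stationary_distD(1,2)[OF l] assms(2,3) by (intro payoff_sum_gt_twice_punishment) auto
  then show ?thesis
    unfolding payoff by (rule extortion_payoff_gt_punishment[OF \<open>\<alpha> > 0\<close> dec(2) assms(1) dd relation])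
qed

theorem theorem4p10:
  fixes R P :: real and s :: "'i::finite \<Rightarrow> strategy" and istar :: 'i
  assumes "0 < P" "P < R" "R < 1" "2 * R > 1" "P < 1/2"
    and "\<And>i. is_mem1_vector (fst (s i))"
    and "extortionate R P (fst (s istar))" and "snd (s istar) = False"
    and "\<And>j. j \<noteq> istar \<Longrightarrow> \<not> firm (fst (s j))"
  shows "EUS (payA R P s) istar \<and>
         (\<exists>\<epsilon>>0. \<forall>\<pi>\<in>simplex. 1 - \<epsilon> \<le> \<pi> istar \<and> \<pi> istar < 1
              \<longrightarrow> replicator_rhs (payA R P s) \<pi> istar < 0)"
proof -
  have "payA R P s istar istar = P"
    unfolding payA_def using assms(7,8)
    by (intro longrun_payoff_firm_defector_self) (simp_all add: extortionate_def)
  moreover have "payA R P s j istar > P" if "j \<noteq> istar" for j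
    unfolding payA_def using that by (intro longrun_payoff_against_extortioner_gt assms(1,2,5,6,7,9))
  ultimately have "EUS (payA R P s) istar" by (simp add: EUS_def)
  then show ?thesis using EUS_repelling by blast
qed

end
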